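(* Let $\mathcal{I}$ be an ideal of $\mathcal{A}(D)$. Then $\mathcal{A}(D)/\mathcal{I}$ is a Lie algebra if and only if every plane of $\Pi(D)$ isomorphic to the affine plane of order $3$ (viewed as the element of $\mathcal{A}(D)$ given by its $9$-element point set) lies in $\mathcal{I}$.
   Context: Let $G$ be a group generated by a conjugacy class $D$ of involutions such that for all $d,e\in D$ the order of $de$ is $1$, $2$ or $3$. The Fischer space $\Pi(D)$ has point set $D$ and lines the triples $\{d,e,d^e\}$ with $d,e\in D$ non-commuting; a plane is the subspace generated by two intersecting lines (it is a dual affine plane of order $2$ or an affine plane of order $3$). $\mathcal{A}(D)$ is the $\mathbb{F}_2$-vector space of finite subsets of $D$ under symmetric difference (basis $D$), with bilinear product determined by $d*e=d+e+f$ if $\{d,e,f\}$ is a line and $d*e=0$ otherwise. A Lie algebra means the product satisfies $x*x=0$ and the Jacobi identity. *)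

theory Defs
  imports "HOL-Algebra.Algebra"
begin

definition gconj :: "('a, 'b) monoid_scheme \<Rightarrow> 'a \<Rightarrow> 'a \<Rightarrow> 'a" where
  "gconj G d e = inv\<^bsub>G\<^esub> e \<otimes>\<^bsub>G\<^esub> d \<otimes>\<^bsub>G\<^esub> e"

definition fischer_line :: "('a, 'b) monoid_scheme \<Rightarrow> 'a set \<Rightarrow> 'a set \<Rightarrow> bool" where
  "fischer_line G D L \<longleftrightarrow>
     (\<exists>d\<in>D. \<exists>e\<in>D. d \<otimes>\<^bsub>G\<^esub> e \<noteq> e \<otimes>\<^bsub>G\<^esub> d \<and> L = {d, e, gconj G d e})"

definition fischer_subspace :: "('a, 'b) monoid_scheme \<Rightarrow> 'a set \<Rightarrow> 'a set \<Rightarrow> bool" where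
  "fischer_subspace G D S \<longleftrightarrow> S \<subseteq> D \<and>
     (\<forall>L. fischer_line G D L \<longrightarrow> 2 \<le> card (L \<inter> S) \<longrightarrow> L \<subseteq> S)"

definition fischer_span :: "('a, 'b) monoid_scheme \<Rightarrow> 'a set \<Rightarrow> 'a set \<Rightarrow> 'a set" where
  "fischer_span G D Y = {p. \<forall>S. fischer_subspace G D S \<and> Y \<subseteq> S \<longrightarrow> p \<in> S}"

definition fischer_plane :: "('a, 'b) monoid_scheme \<Rightarrow> 'a set \<Rightarrow> 'a set \<Rightarrow> bool" where
  "fischer_plane G D P \<longleftrightarrow> (\<exists>L1 L2. fischer_line G D L1 \<and> fischer_line G D L2 \<and>
      L1 \<noteq> L2 \<and> L1 \<inter> L2 \<noteq> {} \<and> P = fischer_span G D (L1 \<union> L2))"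

text \<open>The affine plane AG(2,3) of order 3: points F_3^2 (coordinates in {0,1,2}),
  lines = 3-sets of points whose coordinate sums vanish mod 3.\<close>
definition ag23_points :: "(int \<times> int) set" where
  "ag23_points = {0..2} \<times> {0..2}"

definition ag23_line :: "(int \<times> int) set \<Rightarrow> bool" where
  "ag23_line L \<longleftrightarrow> L \<subseteq> ag23_points \<and> card L = 3 \<and>
     (\<Sum>p\<in>L. fst p) mod 3 = 0 \<and> (\<Sum>p\<in>L. snd p) mod 3 = 0"

definition iso_affine_plane_3 :: "('a, 'b) monoid_scheme \<Rightarrow> 'a set \<Rightarrow> 'a set \<Rightarrow> bool" where
  "iso_affine_plane_3 G D P \<longleftrightarrow> (\<exists>f. bij_betw f P ag23_points \<and>
      (\<forall>L. L \<subseteq> P \<longrightarrow> (fischer_line G D L \<longleftrightarrow> ag23_line (f ` L))))"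

definition symdiff :: "'a set \<Rightarrow> 'a set \<Rightarrow> 'a set" where
  "symdiff x y = (x - y) \<union> (y - x)"

text \<open>Elements: finite subsets of D (F_2-span of the basis D).\<close>
definition AD :: "'a set \<Rightarrow> 'a set set" where
  "AD D = {x. finite x \<and> x \<subseteq> D}"

text \<open>Product of basis elements: d*e = d+e+f if {d,e,f} is a line, else 0.\<close>
definition basis_prod :: "('a, 'b) monoid_scheme \<Rightarrow> 'a \<Rightarrow> 'a \<Rightarrow> 'a set" where
  "basis_prod G d e =
     (if d \<otimes>\<^bsub>G\<^esub> e \<noteq> e \<otimes>\<^bsub>G\<^esub> d then {d, e, gconj G d e} else {})"

text \<open>Bilinear extension over F_2: z occurs in x*y iff it occurs in an odd number of
  the products d*e with d in x, e in y.\<close>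
definition amult :: "('a, 'b) monoid_scheme \<Rightarrow> 'a set \<Rightarrow> 'a set \<Rightarrow> 'a set" where
  "amult G x y = {z. odd (card {(d, e). d \<in> x \<and> e \<in> y \<and> z \<in> basis_prod G d e})}"

definition AD_ideal :: "('a, 'b) monoid_scheme \<Rightarrow> 'a set \<Rightarrow> 'a set set \<Rightarrow> bool" where
  "AD_ideal G D I \<longleftrightarrow> I \<subseteq> AD D \<and> {} \<in> I \<and>
     (\<forall>x\<in>I. \<forall>y\<in>I. symdiff x y \<in> I) \<and>
     (\<forall>x\<in>I. \<forall>y\<in>AD D. amult G x y \<in> I \<and> amult G y x \<in> I)"

text \<open>A(D)/I is a Lie algebra: in the quotient x*x = 0 and the Jacobi identity holds,
  i.e. the corresponding representatives lie in I.\<close>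
definition quotient_is_lie :: "('a, 'b) monoid_scheme \<Rightarrow> 'a set \<Rightarrow> 'a set set \<Rightarrow> bool" where
  "quotient_is_lie G D I \<longleftrightarrow>
     (\<forall>x\<in>AD D. amult G x x \<in> I) \<and>
     (\<forall>x\<in>AD D. \<forall>y\<in>AD D. \<forall>z\<in>AD D.
        symdiff (amult G x (amult G y z))
          (symdiff (amult G y (amult G z x)) (amult G z (amult G x y))) \<in> I)"

end

theory Submission
  imports Defs
begin

text \<open>The product of \<open>\<A>(D)\<close> is commutative on basis elements and \<open>d * d = 0\<close>, so \<open>x * x = 0\<close>
  already holds in \<open>\<A>(D)\<close>, and by trilinearity the Jacobi identity modulo \<open>\<I>\<close> reduces to
  jacobiators \<open>J(d, e, f)\<close> of points \<open>d, e, f \<in> D\<close>. Expanding \<open>J(d, e, f)\<close> with the braid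
  relation \<open>ded = ede\<close> of non-commuting points shows that it vanishes unless any two of
  \<open>d, e, f\<close> are joined by a line and \<open>f\<close> does not commute with \<open>d\<^sup>e\<close>; in that case conjugation produces
  twelve lines on nine points, a copy of AG(2,3), and \<open>J(d, e, f)\<close> is exactly its point set.
  Conversely, every plane isomorphic to AG(2,3) is \<open>J(d, e, f)\<close> for any three of its
  non-collinear points.\<close>

section \<open>Symmetric differences and the algebra \<open>\<A>(D)\<close>\<close>

lemma symdiff_iff [simp]: "z \<in> symdiff x y \<longleftrightarrow> (z \<in> x \<longleftrightarrow> z \<notin> y)"
  unfolding symdiff_def by auto

lemma symdiff_empty [simp]: "symdiff {} x = x" "symdiff x {} = x"
  unfolding symdiff_def by auto

lemma finite_symdiff [simp]: "finite x \<Longrightarrow> finite y \<Longrightarrow> finite (symdiff x y)"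
  unfolding symdiff_def by auto

lemma symdiff_assoc: "symdiff (symdiff a b) c = symdiff a (symdiff b c)"
  by auto

lemma symdiff_commute: "symdiff a b = symdiff b a"
  by auto

lemma symdiff_left_commute: "symdiff a (symdiff b c) = symdiff b (symdiff a c)"
  by auto

lemma symdiff_self: "symdiff a a = {}"
  by auto

lemma symdiff_left_self: "symdiff a (symdiff a b) = b"
  by auto

lemmas symdiff_ac = symdiff_assoc symdiff_commute symdiff_left_commute
  symdiff_self symdiff_left_self symdiff_empty

lemma insert_eq_symdiff: "a \<notin> x \<Longrightarrow> insert a x = symdiff {a} x"
  by auto

lemma symdiff_disjoint: "A \<inter> B = {} \<Longrightarrow> symdiff A B = A \<union> B"
  by auto

lemma three_eq_symdiff: "a \<noteq> b \<Longrightarrow> b \<noteq> c \<Longrightarrow> a \<noteq> c \<Longrightarrow> {a, b, c} = symdiff {a} (symdiff {b} {c})"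
  by auto

lemma odd_card_symdiff:
  assumes "finite A" "finite B"
  shows "odd (card (symdiff A B)) \<longleftrightarrow> (odd (card A) \<longleftrightarrow> even (card B))"
proof -
  have "card (symdiff A B) = card (A - B) + card (B - A)"
    unfolding symdiff_def by (rule card_Un_disjoint) (use assms in auto)
  moreover have "card A = card (A \<inter> B) + card (A - B)" "card B = card (B \<inter> A) + card (B - A)"
    using assms by (simp_all add: card_Int_Diff)
  ultimately show ?thesis by (auto simp: Int_commute)
qed

definition amult_pairs :: "('a, 'b) monoid_scheme \<Rightarrow> 'a set \<Rightarrow> 'a set \<Rightarrow> 'a \<Rightarrow> ('a \<times> 'a) set" where
  "amult_pairs G x y z = {(d, e). d \<in> x \<and> e \<in> y \<and> z \<in> basis_prod G d e}"

lemma amult_eq_odd_pairs: "amult G x y = {z. odd (card (amult_pairs G x y z))}"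
  unfolding amult_def amult_pairs_def ..

lemma finite_amult_pairs: "finite x \<Longrightarrow> finite y \<Longrightarrow> finite (amult_pairs G x y z)"
  unfolding amult_pairs_def by (rule finite_subset[of _ "x \<times> y"]) auto

lemma amult_symdiff_left:
  assumes "finite x" "finite x'" "finite y"
  shows "amult G (symdiff x x') y = symdiff (amult G x y) (amult G x' y)"
proof (rule Set.set_eqI)
  fix z
  have "amult_pairs G (symdiff x x') y z = symdiff (amult_pairs G x y z) (amult_pairs G x' y z)"
    unfolding amult_pairs_def by auto
  then show "z \<in> amult G (symdiff x x') y \<longleftrightarrow> z \<in> symdiff (amult G x y) (amult G x' y)"
    using assms by (simp add: amult_eq_odd_pairs odd_card_symdiff finite_amult_pairs)
qed

lemma amult_symdiff_right:
  assumes "finite x" "finite y" "finite y'"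
  shows "amult G x (symdiff y y') = symdiff (amult G x y) (amult G x y')"
proof (rule Set.set_eqI)
  fix z
  have "amult_pairs G x (symdiff y y') z = symdiff (amult_pairs G x y z) (amult_pairs G x y' z)"
    unfolding amult_pairs_def by auto
  then show "z \<in> amult G x (symdiff y y') \<longleftrightarrow> z \<in> symdiff (amult G x y) (amult G x y')"
    using assms by (simp add: amult_eq_odd_pairs odd_card_symdiff finite_amult_pairs)
qed

lemma amult_empty [simp]: "amult G {} y = {}" "amult G x {} = {}"
  unfolding amult_def by auto

lemma amult_singletons: "amult G {d} {e} = basis_prod G d e"
proof -
  have "{(a, b). a \<in> {d} \<and> b \<in> {e} \<and> z \<in> basis_prod G a b} =
      (if z \<in> basis_prod G d e then {(d, e)} else {})" for z
    by auto
  then show ?thesis unfolding amult_def by auto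
qed

lemma finite_basis_prod: "finite (basis_prod G d e)"
  unfolding basis_prod_def by auto

lemma finite_amult: "finite x \<Longrightarrow> finite y \<Longrightarrow> finite (amult G x y)"
proof (rule finite_subset)
  show "amult G x y \<subseteq> (\<Union>d\<in>x. \<Union>e\<in>y. basis_prod G d e)"
  proof
    fix z assume "z \<in> amult G x y"
    then have "amult_pairs G x y z \<noteq> {}" unfolding amult_eq_odd_pairs by auto
    then show "z \<in> (\<Union>d\<in>x. \<Union>e\<in>y. basis_prod G d e)" unfolding amult_pairs_def by auto
  qed
qed (auto simp: finite_basis_prod)

lemma basis_prod_commuting: "x \<otimes>\<^bsub>G\<^esub> y = y \<otimes>\<^bsub>G\<^esub> x \<Longrightarrow> basis_prod G x y = {}"
  unfolding basis_prod_def by simp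

lemma amult_singleton_three:
  assumes "u \<noteq> v" "v \<noteq> w" "u \<noteq> w"
  shows "amult G {a} {u, v, w} = symdiff (basis_prod G a u) (symdiff (basis_prod G a v) (basis_prod G a w))"
  using assms by (simp add: three_eq_symdiff amult_symdiff_right amult_singletons)

definition jacobiator :: "('a, 'b) monoid_scheme \<Rightarrow> 'a set \<Rightarrow> 'a set \<Rightarrow> 'a set \<Rightarrow> 'a set" where
  "jacobiator G x y z = symdiff (amult G x (amult G y z))
     (symdiff (amult G y (amult G z x)) (amult G z (amult G x y)))"

lemma jacobiator_rotate: "jacobiator G x y z = jacobiator G y z x"
  unfolding jacobiator_def by auto

lemma jacobiator_empty_left: "jacobiator G {} y z = {}"
  unfolding jacobiator_def by simp

lemma jacobiator_symdiff_left:
  assumes "finite x" "finite x'" "finite y" "finite z"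
  shows "jacobiator G (symdiff x x') y z = symdiff (jacobiator G x y z) (jacobiator G x' y z)"
proof -
  have "amult G (symdiff x x') (amult G y z) = symdiff (amult G x (amult G y z)) (amult G x' (amult G y z))"
    "amult G y (amult G z (symdiff x x')) = symdiff (amult G y (amult G z x)) (amult G y (amult G z x'))"
    "amult G z (amult G (symdiff x x') y) = symdiff (amult G z (amult G x y)) (amult G z (amult G x' y))"
    using assms by (simp_all add: amult_symdiff_left amult_symdiff_right finite_amult)
  then show ?thesis
    unfolding jacobiator_def by (simp only:) (rule Set.set_eqI, simp only: symdiff_iff, blast)
qed

lemma jacobiator_singletons_basis_prod:
  "jacobiator G {d} {e} {f} = symdiff (amult G {d} (basis_prod G e f))
     (symdiff (amult G {e} (basis_prod G f d)) (amult G {f} (basis_prod G d e)))"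
  unfolding jacobiator_def amult_singletons ..

lemma jacobiator_mem_of_singleton_left:
  assumes closed: "{} \<in> J" "\<And>a b. a \<in> J \<Longrightarrow> b \<in> J \<Longrightarrow> symdiff a b \<in> J"
    and fin: "finite x" "finite y" "finite z"
    and singleton: "\<And>c. c \<in> x \<Longrightarrow> jacobiator G {c} y z \<in> J"
  shows "jacobiator G x y z \<in> J"
  using fin(1) singleton
proof (induction x rule: finite_induct)
  case empty
  then show ?case using closed by (simp add: jacobiator_empty_left)
next
  case (insert c x)
  then have "jacobiator G (insert c x) y z = symdiff (jacobiator G {c} y z) (jacobiator G x y z)"
    using fin by (simp add: insert_eq_symdiff[of c x] jacobiator_symdiff_left)
  with insert closed show ?case by simp
qed

lemma jacobiator_mem_of_singletons:
  assumes closed: "{} \<in> J" "\<And>a b. a \<in> J \<Longrightarrow> b \<in> J \<Longrightarrow> symdiff a b \<in> J"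
    and fin: "finite x" "finite y" "finite z"
    and singletons: "\<And>a b c. a \<in> x \<Longrightarrow> b \<in> y \<Longrightarrow> c \<in> z \<Longrightarrow> jacobiator G {a} {b} {c} \<in> J"
  shows "jacobiator G x y z \<in> J"
proof (rule jacobiator_mem_of_singleton_left[OF closed fin])
  fix a assume a: "a \<in> x"
  have "jacobiator G y z {a} \<in> J"
  proof (rule jacobiator_mem_of_singleton_left[OF closed fin(2,3)])
    fix b assume b: "b \<in> y"
    have "jacobiator G z {a} {b} \<in> J"
    proof (rule jacobiator_mem_of_singleton_left[OF closed fin(3)])
      fix c assume "c \<in> z"
      then show "jacobiator G {c} {a} {b} \<in> J"
        using singletons[OF a b] by (metis jacobiator_rotate)
    qed simp_all
    then show "jacobiator G {b} z {a} \<in> J"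
      using jacobiator_rotate[of G z "{a}" "{b}"] jacobiator_rotate[of G "{a}" "{b}" z] by simp
  qed simp_all
  then show "jacobiator G {a} y z \<in> J"
    using jacobiator_rotate[of G y z "{a}"] jacobiator_rotate[of G z "{a}" y] by simp
qed

section \<open>The affine plane of order 3\<close>

definition ag23_third :: "int \<times> int \<Rightarrow> int \<times> int \<Rightarrow> int \<times> int" where
  "ag23_third v w = ((- fst v - fst w) mod 3, (- snd v - snd w) mod 3)"

lemma ag23_points_eq: "ag23_points = {(0,0),(1,0),(2,0),(0,1),(1,1),(2,1),(0,2),(1,2),(2,2)}"
proof -
  have "{0..2::int} = {0,1,2}" by auto
  then show ?thesis unfolding ag23_points_def by auto
qed

lemma finite_ag23_points: "finite ag23_points"
  by (simp add: ag23_points_eq)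

lemma card_ag23_points: "card ag23_points = 9"
  by (simp add: ag23_points_eq)

lemma ag23_third_mem: "ag23_third v w \<in> ag23_points"
  unfolding ag23_points_def ag23_third_def by auto

lemma ag23_third_neq:
  assumes "v \<in> ag23_points" "w \<in> ag23_points" "v \<noteq> w"
  shows "ag23_third v w \<noteq> v" "ag23_third v w \<noteq> w"
  using assms unfolding ag23_points_eq ag23_third_def by auto

lemma ag23_line_third:
  assumes "v \<in> ag23_points" "w \<in> ag23_points" "v \<noteq> w"
  shows "ag23_line {v, w, ag23_third v w}"
proof -
  let ?u = "ag23_third v w"
  have "?u \<noteq> v" "?u \<noteq> w" using ag23_third_neq[OF assms] by auto
  with assms have "card {v, w, ?u} = 3"
    and "(\<Sum>p\<in>{v, w, ?u}. fst p) = fst v + fst w + fst ?u"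
    and "(\<Sum>p\<in>{v, w, ?u}. snd p) = snd v + snd w + snd ?u"
    by (simp_all add: add.assoc)
  moreover have "(fst v + fst w + fst ?u) mod 3 = 0" "(snd v + snd w + snd ?u) mod 3 = 0"
    unfolding ag23_third_def by (simp_all add: mod_add_right_eq)
  ultimately show ?thesis
    unfolding ag23_line_def using assms ag23_third_mem by simp
qed

lemma mod_3_eq_neg_sum:
  fixes a b c :: int
  assumes "0 \<le> c" "c \<le> 2" "(a + b + c) mod 3 = 0"
  shows "c = (- a - b) mod 3"
proof -
  have "(- a - b) mod 3 = (c mod 3 - (a + b + c) mod 3) mod 3"
    by (simp add: mod_diff_eq algebra_simps)
  also have "\<dots> = c" using assms by simp
  finally show ?thesis by simp
qed

lemma ag23_lineE:
  assumes "ag23_line M"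
  obtains v w where "v \<in> ag23_points" "w \<in> ag23_points" "v \<noteq> w" "M = {v, w, ag23_third v w}"
proof -
  from assms have M: "M \<subseteq> ag23_points" "card M = 3"
    and sums: "(\<Sum>p\<in>M. fst p) mod 3 = 0" "(\<Sum>p\<in>M. snd p) mod 3 = 0"
    unfolding ag23_line_def by auto
  then obtain v w u where vwu: "M = {v, w, u}" "v \<noteq> w" "w \<noteq> u" "v \<noteq> u"
    by (metis card_3_iff)
  have "(fst v + fst w + fst u) mod 3 = 0" "(snd v + snd w + snd u) mod 3 = 0"
    using sums vwu by (simp_all add: add.assoc)
  moreover have "u \<in> ag23_points" using M vwu by auto
  ultimately have "u = ag23_third v w"
    unfolding ag23_third_def ag23_points_def by (auto intro: prod_eqI mod_3_eq_neg_sum)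
  moreover have "v \<in> ag23_points" "w \<in> ag23_points" using M vwu by auto
  ultimately show thesis using that vwu by blast
qed

definition ag23_label :: "'a \<Rightarrow> 'a \<Rightarrow> 'a \<Rightarrow> 'a \<Rightarrow> 'a \<Rightarrow> 'a \<Rightarrow> 'a \<Rightarrow> 'a \<Rightarrow> 'a \<Rightarrow> int \<times> int \<Rightarrow> 'a" where
  "ag23_label a00 a10 a20 a01 a11 a21 a02 a12 a22 v =
    (if v = (0,0) then a00 else if v = (1,0) then a10 else if v = (2,0) then a20 else
     if v = (0,1) then a01 else if v = (1,1) then a11 else if v = (2,1) then a21 else
     if v = (0,2) then a02 else if v = (1,2) then a12 else a22)"

section \<open>Fischer spaces of classes of 3-transpositions\<close>

text \<open>The hypotheses on \<open>D\<close> that are actually used: a set of involutions, closed under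
  conjugation by its own elements, in which non-commuting elements have product of order 3.\<close>
locale fischer_class = group G for G (structure) +
  fixes D :: "'a set"
  assumes D_carrier: "D \<subseteq> carrier G"
    and D_involution: "x \<in> D \<Longrightarrow> x \<otimes> x = \<one>"
    and D_conj_closed: "x \<in> D \<Longrightarrow> g \<in> D \<Longrightarrow> g \<otimes> x \<otimes> g \<in> D"
    and D_braid: "x \<in> D \<Longrightarrow> y \<in> D \<Longrightarrow> x \<otimes> y \<noteq> y \<otimes> x \<Longrightarrow> x \<otimes> y \<otimes> x = y \<otimes> x \<otimes> y"
begin

lemma D_mem_carrier [simp]: "x \<in> D \<Longrightarrow> x \<in> carrier G"
  using D_carrier by auto

lemma D_involution_cancel [simp]: "x \<in> D \<Longrightarrow> y \<in> carrier G \<Longrightarrow> x \<otimes> (x \<otimes> y) = y"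
  by (metis D_mem_carrier D_involution l_one m_assoc)

lemma D_inv [simp]: "x \<in> D \<Longrightarrow> inv x = x"
  by (metis D_mem_carrier D_involution inv_equality)

lemma D_conj [simp]: "x \<in> D \<Longrightarrow> g \<in> D \<Longrightarrow> g \<otimes> (x \<otimes> g) \<in> D"
  using D_conj_closed by (simp add: m_assoc)

lemma D_braid': "x \<in> D \<Longrightarrow> y \<in> D \<Longrightarrow> x \<otimes> y \<noteq> y \<otimes> x \<Longrightarrow> x \<otimes> (y \<otimes> x) = y \<otimes> (x \<otimes> y)"
  using D_braid by (simp add: m_assoc)

lemma conj_conj_cancel: "g \<in> D \<Longrightarrow> w \<in> carrier G \<Longrightarrow> g \<otimes> ((g \<otimes> (w \<otimes> g)) \<otimes> g) = w"
  by (simp add: m_assoc D_involution)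

lemma conj_commuting: "g \<in> D \<Longrightarrow> w \<in> carrier G \<Longrightarrow> g \<otimes> w = w \<otimes> g \<Longrightarrow> g \<otimes> (w \<otimes> g) = w"
  by (metis D_mem_carrier D_involution_cancel m_assoc)

lemma commute_product:
  "x \<in> carrier G \<Longrightarrow> y \<in> carrier G \<Longrightarrow> z \<in> carrier G \<Longrightarrow> x \<otimes> y = y \<otimes> x \<Longrightarrow> x \<otimes> z = z \<otimes> x
    \<Longrightarrow> x \<otimes> (y \<otimes> z) = (y \<otimes> z) \<otimes> x"
  by (metis m_assoc)

lemma commute_conj_iff:
  assumes g: "g \<in> D" and x: "x \<in> carrier G" and y: "y \<in> carrier G"
  shows "(g \<otimes> (x \<otimes> g)) \<otimes> (g \<otimes> (y \<otimes> g)) = (g \<otimes> (y \<otimes> g)) \<otimes> (g \<otimes> (x \<otimes> g)) \<longleftrightarrow> x \<otimes> y = y \<otimes> x"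
proof -
  have "(g \<otimes> (x \<otimes> g)) \<otimes> (g \<otimes> (y \<otimes> g)) = g \<otimes> ((x \<otimes> y) \<otimes> g)"
    "(g \<otimes> (y \<otimes> g)) \<otimes> (g \<otimes> (x \<otimes> g)) = g \<otimes> ((y \<otimes> x) \<otimes> g)"
    using g x y by (simp_all add: m_assoc)
  moreover have "g \<otimes> ((x \<otimes> y) \<otimes> g) = g \<otimes> ((y \<otimes> x) \<otimes> g) \<longleftrightarrow> x \<otimes> y = y \<otimes> x"
  proof
    assume "g \<otimes> ((x \<otimes> y) \<otimes> g) = g \<otimes> ((y \<otimes> x) \<otimes> g)"
    then show "x \<otimes> y = y \<otimes> x" using g x y by (meson D_mem_carrier l_cancel m_closed r_cancel)
  qed simp
  ultimately show ?thesis by simp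
qed

definition line_triple :: "'a \<Rightarrow> 'a \<Rightarrow> 'a \<Rightarrow> bool" where
  "line_triple x y z \<longleftrightarrow> x \<in> D \<and> y \<in> D \<and> x \<otimes> y \<noteq> y \<otimes> x \<and> z = y \<otimes> (x \<otimes> y)"

lemma line_tripleI: "x \<in> D \<Longrightarrow> y \<in> D \<Longrightarrow> x \<otimes> y \<noteq> y \<otimes> x \<Longrightarrow> line_triple x y (y \<otimes> (x \<otimes> y))"
  unfolding line_triple_def by simp

lemma line_triple_in_D: "line_triple x y z \<Longrightarrow> x \<in> D \<and> y \<in> D \<and> z \<in> D"
  unfolding line_triple_def by auto

lemma line_triple_noncommuting: "line_triple x y z \<Longrightarrow> x \<otimes> y \<noteq> y \<otimes> x"
  unfolding line_triple_def by auto

lemma line_triple_third: "line_triple x y z \<Longrightarrow> y \<otimes> (x \<otimes> y) = z"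
  unfolding line_triple_def by auto

lemma line_triple_swap: "line_triple x y z \<Longrightarrow> line_triple y x z"
  unfolding line_triple_def using D_braid' by metis

lemma line_triple_swap_right:
  assumes "line_triple x y z"
  shows "line_triple x z y"
proof -
  from assms have x: "x \<in> D" and y: "y \<in> D" and nc: "x \<otimes> y \<noteq> y \<otimes> x" and z: "z = y \<otimes> (x \<otimes> y)"
    unfolding line_triple_def by auto
  have braid: "x \<otimes> (y \<otimes> x) = y \<otimes> (x \<otimes> y)" using D_braid' x y nc .
  have zD: "z \<in> D" using z x y by simp
  have "z \<otimes> (x \<otimes> z) = y \<otimes> (x \<otimes> (y \<otimes> (x \<otimes> (y \<otimes> (x \<otimes> y)))))"
    using z x y by (simp add: m_assoc)
  also have "\<dots> = y \<otimes> (x \<otimes> (x \<otimes> (y \<otimes> (x \<otimes> (x \<otimes> y)))))"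
    using braid x y by (metis D_mem_carrier m_assoc m_closed)
  also have "\<dots> = y" using x y by simp
  finally have zxz: "z \<otimes> (x \<otimes> z) = y" .
  moreover have "x \<otimes> z \<noteq> z \<otimes> x"
  proof
    assume "x \<otimes> z = z \<otimes> x"
    then have "z \<otimes> (x \<otimes> z) = x" using x zD by (metis D_mem_carrier D_involution_cancel m_assoc)
    with zxz nc show False by simp
  qed
  ultimately show ?thesis unfolding line_triple_def using x zD by simp
qed

lemma line_triple_perms:
  "line_triple x y z \<Longrightarrow> line_triple x y z \<and> line_triple y x z \<and> line_triple x z y \<and>
     line_triple z x y \<and> line_triple y z x \<and> line_triple z y x"
  by (meson line_triple_swap line_triple_swap_right)

lemma line_triple_distinct: "line_triple x y z \<Longrightarrow> x \<noteq> y \<and> x \<noteq> z \<and> y \<noteq> z"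
  using line_triple_perms line_triple_noncommuting by metis

lemma line_triple_unique: "line_triple x y z \<Longrightarrow> line_triple x y z' \<Longrightarrow> z = z'"
  unfolding line_triple_def by simp

lemma line_triple_through:
  assumes "line_triple x y z" "a \<in> {x, y, z}" "b \<in> {x, y, z}" "a \<noteq> b"
  obtains c where "line_triple a b c" "{x, y, z} = {a, b, c}"
  using assms line_triple_perms[OF assms(1)] by auto

lemma line_triple_conj:
  assumes "line_triple x y z" "g \<in> D"
  shows "line_triple (g \<otimes> (x \<otimes> g)) (g \<otimes> (y \<otimes> g)) (g \<otimes> (z \<otimes> g))"
proof -
  from assms have x: "x \<in> D" and y: "y \<in> D" and nc: "x \<otimes> y \<noteq> y \<otimes> x" and z: "z = y \<otimes> (x \<otimes> y)"
    unfolding line_triple_def by auto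
  have "g \<otimes> (z \<otimes> g) = (g \<otimes> (y \<otimes> g)) \<otimes> ((g \<otimes> (x \<otimes> g)) \<otimes> (g \<otimes> (y \<otimes> g)))"
    using x y assms(2) z by (simp add: m_assoc)
  moreover have "(g \<otimes> (x \<otimes> g)) \<otimes> (g \<otimes> (y \<otimes> g)) \<noteq> (g \<otimes> (y \<otimes> g)) \<otimes> (g \<otimes> (x \<otimes> g))"
    using commute_conj_iff[OF assms(2)] x y nc by simp
  ultimately show ?thesis unfolding line_triple_def using x y assms(2) by simp
qed

lemma gconj_eq: "d \<in> D \<Longrightarrow> e \<in> D \<Longrightarrow> gconj G d e = e \<otimes> (d \<otimes> e)"
  unfolding gconj_def by (simp add: m_assoc)

lemma fischer_line_iff: "fischer_line G D L \<longleftrightarrow> (\<exists>x y z. line_triple x y z \<and> L = {x, y, z})"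
  unfolding fischer_line_def line_triple_def by (auto simp: gconj_eq)

lemma fischer_line_subset_D: "fischer_line G D L \<Longrightarrow> L \<subseteq> D"
  unfolding fischer_line_iff using line_triple_in_D by blast

lemma fischer_subspace_line_triple:
  assumes S: "fischer_subspace G D S" and xyz: "line_triple x y z" and "x \<in> S" "y \<in> S"
  shows "z \<in> S"
proof -
  have "fischer_line G D {x, y, z}" using xyz fischer_line_iff by blast
  moreover have "card {x, y} \<le> card ({x, y, z} \<inter> S)"
    using assms by (intro card_mono) auto
  then have "2 \<le> card ({x, y, z} \<inter> S)" using line_triple_distinct[OF xyz] by simp
  ultimately show ?thesis using S unfolding fischer_subspace_def by blast
qed

definition affine_embedding :: "(int \<times> int \<Rightarrow> 'a) \<Rightarrow> bool" where
  "affine_embedding \<phi> \<longleftrightarrow> (\<forall>v\<in>ag23_points. \<forall>w\<in>ag23_points.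
     v \<noteq> w \<longrightarrow> line_triple (\<phi> v) (\<phi> w) (\<phi> (ag23_third v w)))"

lemma affine_embeddingD:
  "affine_embedding \<phi> \<Longrightarrow> v \<in> ag23_points \<Longrightarrow> w \<in> ag23_points \<Longrightarrow> v \<noteq> w
    \<Longrightarrow> line_triple (\<phi> v) (\<phi> w) (\<phi> (ag23_third v w))"
  unfolding affine_embedding_def by blast

context
  fixes \<phi> assumes \<phi>: "affine_embedding \<phi>"
begin

lemma affine_embedding_inj: "inj_on \<phi> ag23_points"
proof (rule inj_onI, rule ccontr)
  fix v w assume "v \<in> ag23_points" "w \<in> ag23_points" "\<phi> v = \<phi> w" "v \<noteq> w"
  then show False using affine_embeddingD[OF \<phi>] line_triple_distinct by metis
qed

lemma affine_embedding_image_subset_D: "\<phi> ` ag23_points \<subseteq> D"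
proof
  fix x assume "x \<in> \<phi> ` ag23_points"
  then obtain v where v: "v \<in> ag23_points" "x = \<phi> v" by auto
  obtain w where "w \<in> ag23_points" "v \<noteq> w"
  proof (cases "v = (0, 0)")
    case True
    then show ?thesis using that[of "(1, 0)"] by (simp add: ag23_points_def)
  next
    case False
    then show ?thesis using that[of "(0, 0)"] by (simp add: ag23_points_def)
  qed
  with v show "x \<in> D" using affine_embeddingD[OF \<phi>] line_triple_in_D by blast
qed

lemma affine_embedding_subspace: "fischer_subspace G D (\<phi> ` ag23_points)"
  unfolding fischer_subspace_def
proof (intro conjI affine_embedding_image_subset_D allI impI)
  fix L assume L: "fischer_line G D L" "2 \<le> card (L \<inter> \<phi> ` ag23_points)"
  obtain x y z where xyz: "line_triple x y z" and L_eq: "L = {x, y, z}"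
    using L(1) unfolding fischer_line_iff by blast
  have "finite (L \<inter> \<phi> ` ag23_points)" using L_eq by simp
  then have "\<not> (\<forall>a\<in>L \<inter> \<phi> ` ag23_points. \<forall>b\<in>L \<inter> \<phi> ` ag23_points. a = b)"
    using L(2) card_le_Suc0_iff_eq[of "L \<inter> \<phi> ` ag23_points"] by linarith
  then obtain a b where a: "a \<in> L" "a \<in> \<phi> ` ag23_points" and b: "b \<in> L" "b \<in> \<phi> ` ag23_points"
    and "a \<noteq> b"
    by blast
  obtain v w where v: "v \<in> ag23_points" "a = \<phi> v" and w: "w \<in> ag23_points" "b = \<phi> w"
    using a(2) b(2) by blast
  with \<open>a \<noteq> b\<close> have "v \<noteq> w" by blast
  have abc: "line_triple a b (\<phi> (ag23_third v w))"
    using affine_embeddingD[OF \<phi> v(1) w(1) \<open>v \<noteq> w\<close>] v(2) w(2) by simp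
  obtain c where "line_triple a b c" "L = {a, b, c}"
    using line_triple_through[OF xyz] a(1) b(1) L_eq \<open>a \<noteq> b\<close> by metis
  then have "L = {a, b, \<phi> (ag23_third v w)}" using line_triple_unique[OF _ abc] by simp
  then show "L \<subseteq> \<phi> ` ag23_points" using a(2) b(2) ag23_third_mem by blast
qed

lemma affine_embedding_image_subset:
  assumes S: "fischer_subspace G D S" and "\<phi> (0, 0) \<in> S" "\<phi> (1, 0) \<in> S" "\<phi> (0, 1) \<in> S"
  shows "\<phi> ` ag23_points \<subseteq> S"
proof -
  have step: "\<phi> (ag23_third v w) \<in> S"
    if "v \<in> ag23_points" "w \<in> ag23_points" "v \<noteq> w" "\<phi> v \<in> S" "\<phi> w \<in> S" for v w
    using fischer_subspace_line_triple[OF S affine_embeddingD[OF \<phi>]] that by blast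
  have "\<phi> (2, 0) \<in> S" "\<phi> (0, 2) \<in> S" "\<phi> (2, 2) \<in> S"
    using step[of "(0, 0)" "(1, 0)"] step[of "(0, 0)" "(0, 1)"] step[of "(1, 0)" "(0, 1)"] assms
    by (simp_all add: ag23_points_eq ag23_third_def)
  then have "\<phi> (1, 1) \<in> S" "\<phi> (2, 1) \<in> S" "\<phi> (1, 2) \<in> S"
    using step[of "(0, 0)" "(2, 2)"] step[of "(1, 0)" "(0, 2)"] step[of "(2, 0)" "(0, 1)"] assms
    by (simp_all add: ag23_points_eq ag23_third_def)
  with \<open>\<phi> (2, 0) \<in> S\<close> \<open>\<phi> (0, 2) \<in> S\<close> \<open>\<phi> (2, 2) \<in> S\<close> assms(2-4) show ?thesis
    by (auto simp: ag23_points_eq)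
qed

lemma affine_embedding_iso: "iso_affine_plane_3 G D (\<phi> ` ag23_points)"
  unfolding iso_affine_plane_3_def
proof (intro exI conjI allI impI)
  let ?\<psi> = "inv_into ag23_points \<phi>"
  show "bij_betw ?\<psi> (\<phi> ` ag23_points) ag23_points"
    by (simp add: affine_embedding_inj bij_betw_inv_into inj_on_imp_bij_betw)
  fix L assume L: "L \<subseteq> \<phi> ` ag23_points"
  define M where "M = ?\<psi> ` L"
  have M: "M \<subseteq> ag23_points" unfolding M_def using L inv_into_into[of _ \<phi> ag23_points] by blast
  have L_eq: "L = \<phi> ` M" unfolding M_def using L by (force simp: f_inv_into_f image_image)
  show "fischer_line G D L \<longleftrightarrow> ag23_line (?\<psi> ` L)"
    unfolding M_def[symmetric]
  proof
    assume "fischer_line G D L"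
    then obtain x y z where xyz: "line_triple x y z" and L_xyz: "L = {x, y, z}"
      unfolding fischer_line_iff by blast
    have "x \<in> \<phi> ` M" "y \<in> \<phi> ` M" using L_eq L_xyz by auto
    then obtain v w where vw: "v \<in> M" "w \<in> M" and x: "x = \<phi> v" and y: "y = \<phi> w"
      by blast
    have "v \<noteq> w" using x y line_triple_distinct[OF xyz] by blast
    have vw': "v \<in> ag23_points" "w \<in> ag23_points" using vw M by auto
    have "z = \<phi> (ag23_third v w)"
      using line_triple_unique[OF xyz] affine_embeddingD[OF \<phi> vw' \<open>v \<noteq> w\<close>] x y by simp
    then have "\<phi> ` M = \<phi> ` {v, w, ag23_third v w}" using L_eq L_xyz x y by simp
    moreover have "{v, w, ag23_third v w} \<subseteq> ag23_points" using vw' ag23_third_mem by simp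
    ultimately have "M = {v, w, ag23_third v w}"
      using inj_on_image_eq_iff[OF affine_embedding_inj M] by blast
    then show "ag23_line M" using ag23_line_third[OF vw' \<open>v \<noteq> w\<close>] by simp
  next
    assume "ag23_line M"
    then obtain v w where vw: "v \<in> ag23_points" "w \<in> ag23_points" "v \<noteq> w"
      and "M = {v, w, ag23_third v w}"
      by (rule ag23_lineE)
    then have "L = {\<phi> v, \<phi> w, \<phi> (ag23_third v w)}" using L_eq by simp
    then show "fischer_line G D L"
      unfolding fischer_line_iff using affine_embeddingD[OF \<phi> vw] by blast
  qed
qed

lemma affine_embedding_plane: "fischer_plane G D (\<phi> ` ag23_points)"
  unfolding fischer_plane_def
proof (intro exI conjI)
  let ?L1 = "{\<phi> (0, 0), \<phi> (1, 0), \<phi> (2, 0)}" and ?L2 = "{\<phi> (0, 0), \<phi> (0, 1), \<phi> (0, 2)}"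
  have "line_triple (\<phi> (0, 0)) (\<phi> (1, 0)) (\<phi> (2, 0))" "line_triple (\<phi> (0, 0)) (\<phi> (0, 1)) (\<phi> (0, 2))"
    using affine_embeddingD[OF \<phi>, of "(0, 0)" "(1, 0)"] affine_embeddingD[OF \<phi>, of "(0, 0)" "(0, 1)"]
    by (simp_all add: ag23_points_eq ag23_third_def)
  then show "fischer_line G D ?L1" "fischer_line G D ?L2"
    unfolding fischer_line_iff by blast+
  have "\<phi> (0, 1) \<notin> ?L1"
    using affine_embedding_inj unfolding inj_on_def ag23_points_eq by auto
  then show "?L1 \<noteq> ?L2" by auto
  show "?L1 \<inter> ?L2 \<noteq> {}" by auto
  show "\<phi> ` ag23_points = fischer_span G D (?L1 \<union> ?L2)"
  proof
    show "fischer_span G D (?L1 \<union> ?L2) \<subseteq> \<phi> ` ag23_points"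
      unfolding fischer_span_def using affine_embedding_subspace by (auto simp: ag23_points_eq)
    show "\<phi> ` ag23_points \<subseteq> fischer_span G D (?L1 \<union> ?L2)"
      unfolding fischer_span_def using affine_embedding_image_subset by blast
  qed
qed

end

lemma ag23_label_affine_embedding:
  assumes "line_triple a10 a00 a20" "line_triple a01 a00 a02" "line_triple a01 a10 a22"
    "line_triple a01 a20 a12" "line_triple a00 a22 a11" "line_triple a10 a02 a21"
    "line_triple a00 a21 a12" "line_triple a20 a02 a11" "line_triple a10 a11 a12"
    "line_triple a01 a11 a21" "line_triple a22 a02 a12" "line_triple a22 a21 a20"
  shows "affine_embedding (ag23_label a00 a10 a20 a01 a11 a21 a02 a12 a22)"
  unfolding affine_embedding_def
proof (intro ballI impI)
  fix v w assume "v \<in> ag23_points" "w \<in> ag23_points" "v \<noteq> w"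
  note lines = line_triple_perms[OF assms(1)] line_triple_perms[OF assms(2)]
    line_triple_perms[OF assms(3)] line_triple_perms[OF assms(4)]
    line_triple_perms[OF assms(5)] line_triple_perms[OF assms(6)]
    line_triple_perms[OF assms(7)] line_triple_perms[OF assms(8)]
    line_triple_perms[OF assms(9)] line_triple_perms[OF assms(10)]
    line_triple_perms[OF assms(11)] line_triple_perms[OF assms(12)]
  from \<open>v \<in> ag23_points\<close> \<open>w \<in> ag23_points\<close> \<open>v \<noteq> w\<close>
  show "line_triple (ag23_label a00 a10 a20 a01 a11 a21 a02 a12 a22 v)
      (ag23_label a00 a10 a20 a01 a11 a21 a02 a12 a22 w)
      (ag23_label a00 a10 a20 a01 a11 a21 a02 a12 a22 (ag23_third v w))"
    unfolding ag23_points_eq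
    by (simp only: insert_iff empty_iff, elim disjE) (simp_all add: ag23_third_def ag23_label_def lines)
qed

text \<open>Coordinates for the plane generated by \<open>d = (0,0), e = (1,0), f = (0,1)\<close>: every further point
  is the third point of a line through two points already placed.\<close>
definition nine_point_plane :: "'a \<Rightarrow> 'a \<Rightarrow> 'a \<Rightarrow> int \<times> int \<Rightarrow> 'a" where
  "nine_point_plane d e f =
    (let p20 = d \<otimes> (e \<otimes> d); p02 = d \<otimes> (f \<otimes> d); p22 = e \<otimes> (f \<otimes> e);
         p11 = p22 \<otimes> (d \<otimes> p22); p21 = p02 \<otimes> (e \<otimes> p02); p12 = p20 \<otimes> (f \<otimes> p20)
     in ag23_label d e p20 f p11 p21 p02 p12 p22)"

lemma nine_point_plane_generators:
  "nine_point_plane d e f (0, 0) = d" "nine_point_plane d e f (1, 0) = e" "nine_point_plane d e f (0, 1) = f"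
  unfolding nine_point_plane_def ag23_label_def Let_def by simp_all

context
  fixes d e f
  assumes d: "d \<in> D" and e: "e \<in> D" and f: "f \<in> D"
    and de: "d \<otimes> e \<noteq> e \<otimes> d" and df: "d \<otimes> f \<noteq> f \<otimes> d" and ef: "e \<otimes> f \<noteq> f \<otimes> e"
    and f_de: "f \<otimes> (d \<otimes> (e \<otimes> d)) \<noteq> (d \<otimes> (e \<otimes> d)) \<otimes> f"
begin

text \<open>Each further line is the image of a line already found under conjugation by a point.\<close>
lemma nine_point_lines_first:
  assumes p20_def: "p20 = d \<otimes> (e \<otimes> d)" and p02_def: "p02 = d \<otimes> (f \<otimes> d)"
    and p22_def: "p22 = e \<otimes> (f \<otimes> e)" and p11_def: "p11 = p22 \<otimes> (d \<otimes> p22)"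
    and p21_def: "p21 = p02 \<otimes> (e \<otimes> p02)" and p12_def: "p12 = p20 \<otimes> (f \<otimes> p20)"
  shows "line_triple e d p20" "line_triple f d p02" "line_triple f e p22"
    "line_triple f p20 p12" "line_triple d p22 p11" "line_triple e p02 p21"
proof -
  show L1: "line_triple e d p20" unfolding p20_def using d e de by (simp add: line_tripleI)
  show L2: "line_triple f d p02" unfolding p02_def using d f df by (simp add: line_tripleI)
  show L3: "line_triple f e p22" unfolding p22_def using e f ef by (simp add: line_tripleI)
  show L4: "line_triple f p20 p12"
    unfolding p12_def using d e f f_de by (simp add: line_tripleI p20_def)
  have "line_triple (e \<otimes> (f \<otimes> e)) (e \<otimes> (p20 \<otimes> e)) (e \<otimes> (p12 \<otimes> e))"
    using line_triple_conj[OF L4 e] .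
  then have "line_triple d p22 (e \<otimes> (p12 \<otimes> e))"
    using line_triple_perms[OF L1] line_triple_third line_triple_swap p22_def by metis
  then show "line_triple d p22 p11" using line_triple_third p11_def by metis
  have "line_triple (d \<otimes> (f \<otimes> d)) (d \<otimes> (p20 \<otimes> d)) (d \<otimes> (p12 \<otimes> d))"
    using line_triple_conj[OF L4 d] .
  then have "line_triple e p02 (d \<otimes> (p12 \<otimes> d))"
    using line_triple_perms[OF L1] line_triple_third line_triple_swap p02_def by metis
  then show "line_triple e p02 p21" using line_triple_third p21_def by metis
qed

lemma nine_point_lines_second:
  assumes p20_def: "p20 = d \<otimes> (e \<otimes> d)" and p02_def: "p02 = d \<otimes> (f \<otimes> d)"
    and p22_def: "p22 = e \<otimes> (f \<otimes> e)" and p11_def: "p11 = p22 \<otimes> (d \<otimes> p22)"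
    and p21_def: "p21 = p02 \<otimes> (e \<otimes> p02)" and p12_def: "p12 = p20 \<otimes> (f \<otimes> p20)"
  shows "line_triple d p21 p12" "line_triple p20 p02 p11" "line_triple e p11 p12"
    "line_triple f p11 p21" "line_triple p22 p02 p12" "line_triple p22 p21 p20"
proof -
  note first = nine_point_lines_first[OF assms]
  note L1 = line_triple_perms[OF first(1)] and L2 = line_triple_perms[OF first(2)]
    and L3 = line_triple_perms[OF first(3)] and L4 = line_triple_perms[OF first(4)]
    and L5 = line_triple_perms[OF first(5)] and L6 = line_triple_perms[OF first(6)]
  have p12_D: "p12 \<in> D" using line_triple_in_D[OF first(4)] by simp
  have e_p12: "e \<otimes> (p12 \<otimes> e) = p11"
    using line_triple_conj[OF first(4) e] L1 L3 L5 line_triple_third line_triple_unique by metis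
  have d_p12: "d \<otimes> (p12 \<otimes> d) = p21"
    using line_triple_conj[OF first(4) d] L1 L2 L6 line_triple_third line_triple_unique by metis
  have "line_triple (p02 \<otimes> (f \<otimes> p02)) (p02 \<otimes> (e \<otimes> p02)) (p02 \<otimes> (p22 \<otimes> p02))"
    using line_triple_conj[OF first(3)] L2 line_triple_in_D by blast
  then have L7': "line_triple d p21 (p02 \<otimes> (p22 \<otimes> p02))"
    using L2 line_triple_third p21_def by metis
  have "p21 \<otimes> (d \<otimes> p21) = d \<otimes> (p21 \<otimes> d)"
    using line_triple_third line_triple_swap L7' by metis
  also have "\<dots> = p12" using d_p12[symmetric] d p12_D by (simp add: m_assoc D_involution)
  finally show L7: "line_triple d p21 p12" using L7' line_triple_third by metis
  have "line_triple (d \<otimes> (e \<otimes> d)) (d \<otimes> (f \<otimes> d)) (d \<otimes> (p22 \<otimes> d))"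
    using line_triple_swap[OF line_triple_conj[OF first(3) d]] .
  then show "line_triple p20 p02 p11" using L5 line_triple_third p20_def p02_def by metis
  have "line_triple (p22 \<otimes> (f \<otimes> p22)) (p22 \<otimes> (d \<otimes> p22)) (p22 \<otimes> (p02 \<otimes> p22))"
    using line_triple_conj[OF first(2)] L3 line_triple_in_D by blast
  then have L9': "line_triple e p11 (p22 \<otimes> (p02 \<otimes> p22))"
    using L3 line_triple_third p11_def by metis
  have "p11 \<otimes> (e \<otimes> p11) = e \<otimes> (p11 \<otimes> e)"
    using line_triple_third line_triple_swap L9' by metis
  also have "\<dots> = p12" using e_p12[symmetric] e p12_D by (simp add: m_assoc D_involution)
  finally show L9: "line_triple e p11 p12" using L9' line_triple_third by metis
  have "line_triple (f \<otimes> (d \<otimes> f)) (f \<otimes> (p22 \<otimes> f)) (f \<otimes> (p11 \<otimes> f))"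
    using line_triple_conj[OF first(5) f] .
  then have f_p11: "f \<otimes> (p11 \<otimes> f) = p21"
    using L2 L3 L6 line_triple_third line_triple_unique by metis
  have "line_triple (p22 \<otimes> (e \<otimes> p22)) (p22 \<otimes> (d \<otimes> p22)) (p22 \<otimes> (p20 \<otimes> p22))"
    using line_triple_conj[OF first(1)] L3 line_triple_in_D by blast
  then have L10': "line_triple f p11 (p22 \<otimes> (p20 \<otimes> p22))"
    using L3 line_triple_third p11_def by metis
  then have "p11 \<otimes> (f \<otimes> p11) = p21" using line_triple_third line_triple_swap f_p11 by metis
  then show "line_triple f p11 p21" using L10' line_triple_third by metis
  have "line_triple (f \<otimes> (e \<otimes> f)) (f \<otimes> (d \<otimes> f)) (f \<otimes> (p20 \<otimes> f))"
    using line_triple_conj[OF first(1) f] .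
  then show "line_triple p22 p02 p12" using L2 L3 L4 line_triple_third by metis
  have "line_triple (f \<otimes> (e \<otimes> f)) (f \<otimes> (p11 \<otimes> f)) (f \<otimes> (p12 \<otimes> f))"
    using line_triple_conj[OF L9 f] .
  then show "line_triple p22 p21 p20" using L3 L4 f_p11 line_triple_third by metis
qed

lemma affine_embedding_nine_point_plane: "affine_embedding (nine_point_plane d e f)"
  unfolding nine_point_plane_def Let_def
  by (rule ag23_label_affine_embedding) (rule nine_point_lines_first nine_point_lines_second; rule refl)+

end

section \<open>Jacobiators of points\<close>

lemma basis_prod_line_triple: "line_triple x y z \<Longrightarrow> basis_prod G x y = {x, y, z}"
  unfolding basis_prod_def line_triple_def by (simp add: gconj_eq)

lemma basis_prod_line_triple_symdiff:
  "line_triple x y z \<Longrightarrow> basis_prod G x y = symdiff {x} (symdiff {y} {z})"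
  using basis_prod_line_triple line_triple_distinct three_eq_symdiff by metis

lemma basis_prod_commute:
  assumes "x \<in> D" "y \<in> D"
  shows "basis_prod G x y = basis_prod G y x"
proof (cases "x \<otimes> y = y \<otimes> x")
  case True
  then show ?thesis by (metis basis_prod_commuting)
next
  case False
  with assms have "line_triple x y (y \<otimes> (x \<otimes> y))" by (rule line_tripleI)
  then have "basis_prod G x y = {x, y, y \<otimes> (x \<otimes> y)}" "basis_prod G y x = {y, x, y \<otimes> (x \<otimes> y)}"
    by (simp_all add: basis_prod_line_triple line_triple_swap)
  then show ?thesis by (simp add: insert_commute)
qed

lemma basis_prod_subset_D: "x \<in> D \<Longrightarrow> y \<in> D \<Longrightarrow> basis_prod G x y \<subseteq> D"
  by (cases "x \<otimes> y = y \<otimes> x") (simp_all add: basis_prod_commuting basis_prod_line_triple[OF line_tripleI])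

lemma amult_commute:
  assumes "x \<subseteq> D" "y \<subseteq> D"
  shows "amult G x y = amult G y x"
proof -
  have "amult_pairs G y x z = prod.swap ` amult_pairs G x y z" for z
  proof -
    have "(b, a) \<in> amult_pairs G y x z \<longleftrightarrow> (a, b) \<in> amult_pairs G x y z" for a b
      using assms basis_prod_commute[of a b] unfolding amult_pairs_def by auto
    then show ?thesis by (auto simp: image_iff) (metis swap_simp)
  qed
  then have "card (amult_pairs G y x z) = card (amult_pairs G x y z)" for z
    by (simp add: card_image)
  then show ?thesis unfolding amult_eq_odd_pairs by simp
qed

lemma amult_self:
  assumes "finite x" "x \<subseteq> D"
  shows "amult G x x = {}"
  using assms
proof (induction x rule: finite_induct)
  case empty
  then show ?case by simp
next
  case (insert a x)
  have a: "a \<in> D" and x: "x \<subseteq> D" using insert.prems by auto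
  have fin: "finite {a}" "finite x" using insert.hyps(1) by auto
  have "amult G (insert a x) (insert a x) = amult G (symdiff {a} x) (symdiff {a} x)"
    using insert_eq_symdiff[OF insert.hyps(2)] by simp
  also have "\<dots> = symdiff (symdiff (amult G {a} {a}) (amult G x {a}))
      (symdiff (amult G {a} x) (amult G x x))"
    using fin by (simp only: amult_symdiff_left amult_symdiff_right finite_symdiff)
  also have "amult G {a} {a} = {}" by (simp add: amult_singletons basis_prod_commuting)
  also have "amult G x {a} = amult G {a} x" using a x by (simp add: amult_commute)
  also have "amult G x x = {}" using insert.IH x .
  finally show ?case by (simp add: symdiff_self)
qed

lemma amult_singleton_basis_prod_line_triple:
  "line_triple y z w \<Longrightarrow>
    amult G {a} (basis_prod G y z) = symdiff (basis_prod G a y) (symdiff (basis_prod G a z) (basis_prod G a w))"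
  using basis_prod_line_triple amult_singleton_three line_triple_distinct by metis

lemma jacobiator_singletons_swap:
  assumes "d \<in> D" "e \<in> D" "f \<in> D"
  shows "jacobiator G {d} {e} {f} = jacobiator G {e} {d} {f}"
proof -
  have "amult G {d} {e} \<subseteq> D" "amult G {e} {f} \<subseteq> D" "amult G {f} {d} \<subseteq> D"
    using assms by (simp_all add: amult_singletons basis_prod_subset_D)
  then have "amult G {d} (amult G {e} {f}) = amult G {d} (amult G {f} {e})"
    "amult G {e} (amult G {f} {d}) = amult G {e} (amult G {d} {f})"
    "amult G {f} (amult G {d} {e}) = amult G {f} (amult G {e} {d})"
    using assms by (simp_all add: amult_commute)
  then show ?thesis unfolding jacobiator_def by (simp add: symdiff_left_commute)
qed

lemma jacobiator_central:
  assumes d: "d \<in> D" and e: "e \<in> D" and f: "f \<in> D"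
    and fd: "f \<otimes> d = d \<otimes> f" and fe: "f \<otimes> e = e \<otimes> f"
  shows "jacobiator G {d} {e} {f} = {}"
proof -
  have "amult G {f} (basis_prod G d e) = {}"
  proof (cases "d \<otimes> e = e \<otimes> d")
    case True
    then show ?thesis by (simp add: basis_prod_commuting)
  next
    case False
    with d e have de: "line_triple d e (e \<otimes> (d \<otimes> e))" by (rule line_tripleI)
    have "f \<otimes> (e \<otimes> (d \<otimes> e)) = (e \<otimes> (d \<otimes> e)) \<otimes> f"
      using commute_product fd fe d e f by simp
    then show ?thesis
      using fd fe by (simp add: amult_singleton_basis_prod_line_triple[OF de] basis_prod_commuting)
  qed
  then show ?thesis
    using fd fe by (simp add: jacobiator_singletons_basis_prod basis_prod_commuting)
qed

lemma jacobiator_one_commuting_pair: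
  assumes d: "d \<in> D" and e: "e \<in> D" and f: "f \<in> D"
    and de: "d \<otimes> e \<noteq> e \<otimes> d" and ef: "e \<otimes> f \<noteq> f \<otimes> e" and df: "d \<otimes> f = f \<otimes> d"
  shows "jacobiator G {d} {e} {f} = {}"
proof -
  define E1 where "E1 = e \<otimes> (d \<otimes> e)"
  define F1 where "F1 = f \<otimes> (e \<otimes> f)"
  have E1_D: "E1 \<in> D" and F1_D: "F1 \<in> D" unfolding E1_def F1_def using d e f by auto
  have d_e: "line_triple d e E1" unfolding E1_def using d e de by (rule line_tripleI)
  have e_f: "line_triple e f F1" unfolding F1_def using e f ef by (rule line_tripleI)
  have "f \<otimes> (d \<otimes> f) = d" using conj_commuting f d df by simp
  moreover have "f \<otimes> (F1 \<otimes> f) = e" unfolding F1_def using conj_conj_cancel[OF f] e by simp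
  ultimately have "d \<otimes> F1 \<noteq> F1 \<otimes> d" using commute_conj_iff[OF f, of d F1] de d F1_D by simp
  then have d_F1: "line_triple d F1 (F1 \<otimes> (d \<otimes> F1))" by (intro line_tripleI d F1_D)
  have "d \<otimes> (f \<otimes> d) = f" using conj_commuting d f df by simp
  moreover have "E1 = d \<otimes> (e \<otimes> d)" unfolding E1_def using D_braid'[OF d e de] by simp
  then have "d \<otimes> (E1 \<otimes> d) = e" using conj_conj_cancel[OF d] e by simp
  ultimately have "f \<otimes> E1 \<noteq> E1 \<otimes> f" using commute_conj_iff[OF d, of f E1] ef f E1_D by simp
  then have f_E1: "line_triple f E1 (E1 \<otimes> (f \<otimes> E1))" by (intro line_tripleI f E1_D)
  txt \<open>The lines through \<open>d, F1\<close> and through \<open>f, E1\<close> share their third point, so all lines cancel.\<close>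
  have "F1 \<otimes> (d \<otimes> F1) = f \<otimes> (e \<otimes> (f \<otimes> (d \<otimes> (f \<otimes> (e \<otimes> f)))))"
    unfolding F1_def using d e f by (simp add: m_assoc)
  also have "f \<otimes> (d \<otimes> (f \<otimes> (e \<otimes> f))) = d \<otimes> (e \<otimes> f)"
    using conj_commuting[OF f _ df[symmetric]] d e f by (metis D_mem_carrier m_assoc m_closed)
  also have "f \<otimes> (e \<otimes> (d \<otimes> (e \<otimes> f))) = f \<otimes> (E1 \<otimes> f)"
    unfolding E1_def using d e f by (simp add: m_assoc)
  also have "\<dots> = E1 \<otimes> (f \<otimes> E1)"
    using line_triple_third[OF line_triple_swap[OF f_E1]] line_triple_third[OF f_E1] by simp
  finally have same_point: "F1 \<otimes> (d \<otimes> F1) = E1 \<otimes> (f \<otimes> E1)" .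
  have "amult G {d} (basis_prod G e f) =
      symdiff (basis_prod G d e) (symdiff (basis_prod G d f) (basis_prod G d F1))"
    using amult_singleton_basis_prod_line_triple[OF e_f] .
  moreover have "amult G {e} (basis_prod G f d) = {}" using df by (simp add: basis_prod_commuting)
  moreover have "amult G {f} (basis_prod G d e) =
      symdiff (basis_prod G f d) (symdiff (basis_prod G f e) (basis_prod G f E1))"
    using amult_singleton_basis_prod_line_triple[OF d_e] .
  moreover have "basis_prod G d f = {}" "basis_prod G f d = {}"
    using df by (simp_all add: basis_prod_commuting)
  ultimately show ?thesis
    unfolding jacobiator_singletons_basis_prod basis_prod_line_triple_symdiff[OF d_e]
      basis_prod_line_triple_symdiff[OF d_F1] basis_prod_line_triple_symdiff[OF line_triple_swap[OF e_f]]
      basis_prod_line_triple_symdiff[OF f_E1] same_point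
    by (simp add: symdiff_ac)
qed

lemma jacobiator_pairwise_noncommuting:
  assumes d: "d \<in> D" and e: "e \<in> D" and f: "f \<in> D"
    and de: "d \<otimes> e \<noteq> e \<otimes> d" and ef: "e \<otimes> f \<noteq> f \<otimes> e" and df: "d \<otimes> f \<noteq> f \<otimes> d"
  shows "jacobiator G {d} {e} {f} = symdiff (basis_prod G d (e \<otimes> (f \<otimes> e)))
    (symdiff (basis_prod G e (d \<otimes> (f \<otimes> d))) (basis_prod G f (d \<otimes> (e \<otimes> d))))"
proof -
  have e_f: "line_triple e f (e \<otimes> (f \<otimes> e))"
    using line_tripleI[OF e f ef] D_braid'[OF e f ef] by simp
  have f_d: "line_triple f d (d \<otimes> (f \<otimes> d))" using line_tripleI[OF f d] df by simp
  have d_e: "line_triple d e (d \<otimes> (e \<otimes> d))"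
    using line_tripleI[OF d e de] D_braid'[OF d e de] by simp
  have "jacobiator G {d} {e} {f} =
    symdiff (symdiff (basis_prod G d e) (symdiff (basis_prod G d f) (basis_prod G d (e \<otimes> (f \<otimes> e)))))
      (symdiff (symdiff (basis_prod G e f) (symdiff (basis_prod G e d) (basis_prod G e (d \<otimes> (f \<otimes> d)))))
        (symdiff (basis_prod G f d) (symdiff (basis_prod G f e) (basis_prod G f (d \<otimes> (e \<otimes> d))))))"
    unfolding jacobiator_singletons_basis_prod amult_singleton_basis_prod_line_triple[OF e_f]
      amult_singleton_basis_prod_line_triple[OF f_d] amult_singleton_basis_prod_line_triple[OF d_e] ..
  also have "basis_prod G e d = basis_prod G d e" using basis_prod_commute d e by simp
  also have "basis_prod G f d = basis_prod G d f" using basis_prod_commute d f by simp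
  also have "basis_prod G f e = basis_prod G e f" using basis_prod_commute e f by simp
  finally show ?thesis by (simp add: symdiff_ac)
qed

lemma jacobiator_degenerate_triangle:
  assumes d: "d \<in> D" and e: "e \<in> D" and f: "f \<in> D"
    and de: "d \<otimes> e \<noteq> e \<otimes> d" and ef: "e \<otimes> f \<noteq> f \<otimes> e" and df: "d \<otimes> f \<noteq> f \<otimes> d"
    and f_de: "f \<otimes> (d \<otimes> (e \<otimes> d)) = (d \<otimes> (e \<otimes> d)) \<otimes> f"
  shows "jacobiator G {d} {e} {f} = {}"
proof -
  have "e \<otimes> (d \<otimes> e) = d \<otimes> (e \<otimes> d)" using D_braid'[OF d e de] by simp
  have "e \<otimes> ((e \<otimes> (f \<otimes> e)) \<otimes> e) = f" using conj_conj_cancel[OF e] f by simp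
  then have "d \<otimes> (e \<otimes> (f \<otimes> e)) = (e \<otimes> (f \<otimes> e)) \<otimes> d"
    using commute_conj_iff[OF e, of d "e \<otimes> (f \<otimes> e)"] f_de d e f
      \<open>e \<otimes> (d \<otimes> e) = d \<otimes> (e \<otimes> d)\<close> by simp
  moreover have "d \<otimes> ((d \<otimes> (f \<otimes> d)) \<otimes> d) = f" using conj_conj_cancel[OF d] f by simp
  then have "e \<otimes> (d \<otimes> (f \<otimes> d)) = (d \<otimes> (f \<otimes> d)) \<otimes> e"
    using commute_conj_iff[OF d, of e "d \<otimes> (f \<otimes> d)"] f_de d e f by simp
  ultimately show ?thesis
    using f_de by (simp add: jacobiator_pairwise_noncommuting[OF assms(1-6)] basis_prod_commuting)
qed

lemma jacobiator_affine_triangle: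
  assumes d: "d \<in> D" and e: "e \<in> D" and f: "f \<in> D"
    and de: "d \<otimes> e \<noteq> e \<otimes> d" and ef: "e \<otimes> f \<noteq> f \<otimes> e" and df: "d \<otimes> f \<noteq> f \<otimes> d"
    and f_de: "f \<otimes> (d \<otimes> (e \<otimes> d)) \<noteq> (d \<otimes> (e \<otimes> d)) \<otimes> f"
  shows "jacobiator G {d} {e} {f} = nine_point_plane d e f ` ag23_points"
proof -
  define p20 where "p20 = d \<otimes> (e \<otimes> d)"
  define p02 where "p02 = d \<otimes> (f \<otimes> d)"
  define p22 where "p22 = e \<otimes> (f \<otimes> e)"
  define p11 where "p11 = p22 \<otimes> (d \<otimes> p22)"
  define p21 where "p21 = p02 \<otimes> (e \<otimes> p02)"
  define p12 where "p12 = p20 \<otimes> (f \<otimes> p20)"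
  note defs = p20_def p02_def p22_def p11_def p21_def p12_def
  note lines1 = nine_point_lines_first[OF d e f de df ef f_de defs]
  have label: "nine_point_plane d e f = ag23_label d e p20 f p11 p21 p02 p12 p22"
    unfolding nine_point_plane_def defs Let_def ..
  have image: "nine_point_plane d e f ` ag23_points = {d, e, p20, f, p11, p21, p02, p12, p22}"
    unfolding label ag23_points_eq by (simp add: ag23_label_def insert_commute)
  have "inj_on (ag23_label d e p20 f p11 p21 p02 p12 p22) ag23_points"
    using affine_embedding_inj[OF affine_embedding_nine_point_plane[OF d e f de df ef f_de]] label by simp
  then have "distinct [d, e, p20, f, p11, p21, p02, p12, p22]"
    unfolding inj_on_def ag23_points_eq ag23_label_def by auto
  then have "{e, p02, p21} \<inter> {f, p20, p12} = {}" "{d, p22, p11} \<inter> ({e, p02, p21} \<union> {f, p20, p12}) = {}"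
    by auto
  moreover have "jacobiator G {d} {e} {f} = symdiff {d, p22, p11} (symdiff {e, p02, p21} {f, p20, p12})"
    unfolding jacobiator_pairwise_noncommuting[OF d e f de ef df]
    using basis_prod_line_triple[OF lines1(5)] basis_prod_line_triple[OF lines1(6)]
      basis_prod_line_triple[OF lines1(4)] defs by simp
  ultimately show ?thesis unfolding image by (simp add: symdiff_disjoint insert_commute)
qed

lemma jacobiator_singletons_cases:
  assumes d: "d \<in> D" and e: "e \<in> D" and f: "f \<in> D"
  shows "jacobiator G {d} {e} {f} = {} \<or>
    (\<exists>\<phi>. affine_embedding \<phi> \<and> jacobiator G {d} {e} {f} = \<phi> ` ag23_points)"
proof -
  have rotate: "jacobiator G {d} {e} {f} = jacobiator G {e} {f} {d}"
    "jacobiator G {d} {e} {f} = jacobiator G {f} {d} {e}"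
    by (metis jacobiator_rotate)+
  have swap: "jacobiator G {d} {e} {f} = jacobiator G {e} {d} {f}"
    "jacobiator G {d} {e} {f} = jacobiator G {d} {f} {e}"
    using jacobiator_singletons_swap[OF d e f] jacobiator_singletons_swap[OF f e d]
      jacobiator_rotate[of G "{d}" "{f}" "{e}"] rotate(1) by metis+
  consider "d \<otimes> f = f \<otimes> d" "e \<otimes> f = f \<otimes> e"
    | "d \<otimes> e = e \<otimes> d" "d \<otimes> f = f \<otimes> d"
    | "d \<otimes> e = e \<otimes> d" "e \<otimes> f = f \<otimes> e"
    | "d \<otimes> f = f \<otimes> d" "d \<otimes> e \<noteq> e \<otimes> d" "e \<otimes> f \<noteq> f \<otimes> e"
    | "d \<otimes> e = e \<otimes> d" "d \<otimes> f \<noteq> f \<otimes> d" "e \<otimes> f \<noteq> f \<otimes> e"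
    | "e \<otimes> f = f \<otimes> e" "d \<otimes> e \<noteq> e \<otimes> d" "d \<otimes> f \<noteq> f \<otimes> d"
    | "d \<otimes> e \<noteq> e \<otimes> d" "d \<otimes> f \<noteq> f \<otimes> d" "e \<otimes> f \<noteq> f \<otimes> e"
    by blast
  then show ?thesis
  proof cases
    case 1
    then show ?thesis using jacobiator_central[OF d e f] by simp
  next
    case 2
    then show ?thesis using jacobiator_central[OF e f d] rotate by simp
  next
    case 3
    then show ?thesis using jacobiator_central[OF f d e] rotate by simp
  next
    case 4
    then show ?thesis using jacobiator_one_commuting_pair[OF d e f] by simp
  next
    case 5
    then show ?thesis using jacobiator_one_commuting_pair[OF d f e] swap by simp
  next
    case 6
    then show ?thesis using jacobiator_one_commuting_pair[OF e d f] swap by simp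
  next
    case 7
    show ?thesis
    proof (cases "f \<otimes> (d \<otimes> (e \<otimes> d)) = (d \<otimes> (e \<otimes> d)) \<otimes> f")
      case True
      with 7 show ?thesis using jacobiator_degenerate_triangle[OF d e f] by simp
    next
      case False
      with 7 show ?thesis
        using jacobiator_affine_triangle[OF d e f] affine_embedding_nine_point_plane[OF d e f] by blast
    qed
  qed
qed

section \<open>Planes isomorphic to AG(2,3) and the Jacobi identity\<close>

lemma fischer_subspace_D: "fischer_subspace G D D"
  unfolding fischer_subspace_def using fischer_line_subset_D by blast

lemma fischer_span_subspace:
  assumes "Y \<subseteq> D"
  shows "fischer_subspace G D (fischer_span G D Y)"
  unfolding fischer_subspace_def
proof (intro conjI allI impI)
  show "fischer_span G D Y \<subseteq> D"
    unfolding fischer_span_def using fischer_subspace_D assms by blast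
  fix L assume L: "fischer_line G D L" "2 \<le> card (L \<inter> fischer_span G D Y)"
  have "finite L" using fischer_line_iff L(1) by auto
  show "L \<subseteq> fischer_span G D Y"
    unfolding fischer_span_def
  proof (intro subsetI CollectI allI impI)
    fix p S assume p: "p \<in> L" and S: "fischer_subspace G D S \<and> Y \<subseteq> S"
    have "card (L \<inter> fischer_span G D Y) \<le> card (L \<inter> S)"
      using S \<open>finite L\<close> unfolding fischer_span_def by (intro card_mono) auto
    with L S have "L \<subseteq> S" unfolding fischer_subspace_def by auto
    with p show "p \<in> S" by blast
  qed
qed

lemma fischer_plane_subspace: "fischer_plane G D P \<Longrightarrow> fischer_subspace G D P"
  unfolding fischer_plane_def using fischer_span_subspace fischer_line_subset_D by (metis Un_subset_iff)

lemma iso_affine_plane_3_card: "iso_affine_plane_3 G D P \<Longrightarrow> finite P \<and> card P = 9"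
  unfolding iso_affine_plane_3_def
  by (metis bij_betw_finite bij_betw_same_card card_ag23_points finite_ag23_points)

lemma iso_affine_plane_3_noncommuting:
  assumes iso: "iso_affine_plane_3 G D P" and xy: "x \<in> P" "y \<in> P" "x \<noteq> y"
  shows "x \<otimes> y \<noteq> y \<otimes> x"
proof -
  obtain h where h: "bij_betw h P ag23_points"
    and lines: "\<And>L. L \<subseteq> P \<Longrightarrow> fischer_line G D L \<longleftrightarrow> ag23_line (h ` L)"
    using iso unfolding iso_affine_plane_3_def by blast
  have vw: "h x \<in> ag23_points" "h y \<in> ag23_points" "h x \<noteq> h y"
    using h xy unfolding bij_betw_def inj_on_def by auto
  obtain z where z: "z \<in> P" "h z = ag23_third (h x) (h y)"
    using h ag23_third_mem unfolding bij_betw_def by (metis imageE)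
  then have "ag23_line (h ` {x, y, z})" using ag23_line_third[OF vw] by simp
  then have "fischer_line G D {x, y, z}" using lines xy z by simp
  then obtain a b c where "line_triple a b c" "{x, y, z} = {a, b, c}"
    unfolding fischer_line_iff by blast
  then obtain c' where "line_triple x y c'" using line_triple_through xy(3) by (metis insertI1 insertI2)
  then show ?thesis by (rule line_triple_noncommuting)
qed

lemma affine_plane_mem_of_quotient_is_lie:
  assumes lie: "quotient_is_lie G D J"
    and P: "fischer_plane G D P" and iso: "iso_affine_plane_3 G D P"
  shows "P \<in> J"
proof -
  have sub: "fischer_subspace G D P" using fischer_plane_subspace[OF P] .
  then have "P \<subseteq> D" unfolding fischer_subspace_def by blast
  have card: "finite P" "card P = 9" using iso_affine_plane_3_card[OF iso] by auto
  note nc = iso_affine_plane_3_noncommuting[OF iso]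
  have "\<not> card P \<le> Suc 0" using card by simp
  then obtain d e where de: "d \<in> P" "e \<in> P" "d \<noteq> e"
    using card_le_Suc0_iff_eq[OF card(1)] by blast
  define p20 where "p20 = d \<otimes> (e \<otimes> d)"
  have "line_triple e d p20"
    unfolding p20_def using de \<open>P \<subseteq> D\<close> nc[of e d] by (intro line_tripleI) auto
  then have "p20 \<in> P" using fischer_subspace_line_triple[OF sub] de by blast
  have "card {d, e, p20} \<le> 3" by (simp add: card_insert_if)
  then have "\<not> P \<subseteq> {d, e, p20}" using card card_mono[of "{d, e, p20}" P] by auto
  then obtain f where f: "f \<in> P" "f \<noteq> d" "f \<noteq> e" "f \<noteq> p20" by blast
  have D: "d \<in> D" "e \<in> D" "f \<in> D" using \<open>P \<subseteq> D\<close> de f by auto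
  have nc': "d \<otimes> e \<noteq> e \<otimes> d" "e \<otimes> f \<noteq> f \<otimes> e" "d \<otimes> f \<noteq> f \<otimes> d"
    "f \<otimes> (d \<otimes> (e \<otimes> d)) \<noteq> (d \<otimes> (e \<otimes> d)) \<otimes> f"
    using nc de f \<open>p20 \<in> P\<close> unfolding p20_def by auto
  note \<phi> = affine_embedding_nine_point_plane[OF D nc'(1,3,2,4)]
  have "nine_point_plane d e f ` ag23_points \<subseteq> P"
    using affine_embedding_image_subset[OF \<phi> sub] nine_point_plane_generators de f by simp
  then have "nine_point_plane d e f ` ag23_points = P"
    using card card_image[OF affine_embedding_inj[OF \<phi>]] card_ag23_points by (metis card_subset_eq)
  moreover have "jacobiator G {d} {e} {f} \<in> J"
    using lie D unfolding quotient_is_lie_def jacobiator_def AD_def by auto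
  ultimately show ?thesis using jacobiator_affine_triangle[OF D nc'] by simp
qed

lemma quotient_is_lie_of_affine_planes_mem:
  assumes J: "AD_ideal G D J"
    and planes: "\<forall>P. fischer_plane G D P \<and> iso_affine_plane_3 G D P \<longrightarrow> P \<in> J"
  shows "quotient_is_lie G D J"
proof -
  have closed: "{} \<in> J" "\<And>a b. a \<in> J \<Longrightarrow> b \<in> J \<Longrightarrow> symdiff a b \<in> J"
    using J unfolding AD_ideal_def by auto
  have basis: "jacobiator G {a} {b} {c} \<in> J" if "a \<in> D" "b \<in> D" "c \<in> D" for a b c
  proof -
    have "\<phi> ` ag23_points \<in> J" if "affine_embedding \<phi>" for \<phi>
      using planes affine_embedding_plane[OF that] affine_embedding_iso[OF that] by blast
    with jacobiator_singletons_cases[OF that] closed(1) show ?thesis by auto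
  qed
  show ?thesis
    unfolding quotient_is_lie_def
  proof (intro conjI ballI)
    fix x assume "x \<in> AD D"
    then show "amult G x x \<in> J" using amult_self closed(1) unfolding AD_def by simp
  next
    fix x y z assume "x \<in> AD D" "y \<in> AD D" "z \<in> AD D"
    then have fin: "finite x" "finite y" "finite z" and sub: "x \<subseteq> D" "y \<subseteq> D" "z \<subseteq> D"
      unfolding AD_def by auto
    have "jacobiator G x y z \<in> J"
      using jacobiator_mem_of_singletons[OF closed fin] basis sub by blast
    then show "symdiff (amult G x (amult G y z))
        (symdiff (amult G y (amult G z x)) (amult G z (amult G x y))) \<in> J"
      unfolding jacobiator_def .
  qed
qed

end

lemma (in group) braid_of_involutions:
  assumes x: "x \<in> carrier G" "x \<otimes> x = \<one>" and y: "y \<in> carrier G" "y \<otimes> y = \<one>"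
    and ord: "ord (x \<otimes> y) \<in> {1, 2, 3}" and nc: "x \<otimes> y \<noteq> y \<otimes> x"
  shows "x \<otimes> y \<otimes> x = y \<otimes> x \<otimes> y"
proof -
  have inv: "inv x = x" "inv y = y" using x y inv_equality by auto
  have pow: "(x \<otimes> y) [^] ord (x \<otimes> y) = \<one>" using x y by simp
  have "ord (x \<otimes> y) \<noteq> 1"
  proof
    assume "ord (x \<otimes> y) = 1"
    then have "x \<otimes> (x \<otimes> y) = x" using pow x y by simp
    then have "y = x" using x y by (simp add: m_assoc[symmetric])
    with nc show False by simp
  qed
  moreover have "ord (x \<otimes> y) \<noteq> 2"
  proof
    assume "ord (x \<otimes> y) = 2"
    then have "(x \<otimes> y) \<otimes> (x \<otimes> y) = \<one>" using pow x y by (simp add: numeral_2_eq_2)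
    then have "x \<otimes> y = inv (x \<otimes> y)" using x y by (metis inv_equality m_closed)
    also have "\<dots> = y \<otimes> x" using x y inv by (simp add: inv_mult_group)
    finally show False using nc by simp
  qed
  ultimately have "ord (x \<otimes> y) = 3" using ord by auto
  then have "(x \<otimes> y) \<otimes> (x \<otimes> y) \<otimes> (x \<otimes> y) = \<one>" using pow x y by (simp add: numeral_3_eq_3)
  then have "(x \<otimes> y \<otimes> x) \<otimes> (y \<otimes> x \<otimes> y) = \<one>" using x y by (simp add: m_assoc)
  then have "x \<otimes> y \<otimes> x = inv (y \<otimes> x \<otimes> y)" using x y by (metis inv_equality m_closed)
  also have "\<dots> = y \<otimes> x \<otimes> y" using x y inv by (simp add: inv_mult_group m_assoc)
  finally show ?thesis .
qed

lemma (in group) fischer_class_conjugacy_class: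
  assumes d0: "d0 \<in> carrier G" and d0_inv: "d0 \<otimes> d0 = \<one>"
    and D_def: "D = {g \<otimes> d0 \<otimes> inv g | g. g \<in> carrier G}"
    and ord: "\<forall>d\<in>D. \<forall>e\<in>D. ord (d \<otimes> e) \<in> {1, 2, 3}"
  shows "fischer_class G D"
proof -
  have D_carrier: "D \<subseteq> carrier G" unfolding D_def using d0 by auto
  have D_involution: "x \<otimes> x = \<one>" if "x \<in> D" for x
  proof -
    obtain g where g: "g \<in> carrier G" "x = g \<otimes> d0 \<otimes> inv g" using \<open>x \<in> D\<close> D_def by blast
    then have "x \<otimes> x = g \<otimes> (d0 \<otimes> d0) \<otimes> inv g" using d0 by (simp add: m_assoc inv_solve_left')
    then show ?thesis using d0_inv g by simp
  qed
  have D_conj_closed: "h \<otimes> x \<otimes> h \<in> D" if "x \<in> D" "h \<in> D" for x h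
  proof -
    obtain g where g: "g \<in> carrier G" "x = g \<otimes> d0 \<otimes> inv g" using \<open>x \<in> D\<close> D_def by blast
    have h: "h \<in> carrier G" "inv h = h"
      using that D_carrier D_involution[OF that(2)] inv_equality by auto
    have "h \<otimes> x \<otimes> h = (h \<otimes> g) \<otimes> d0 \<otimes> inv (h \<otimes> g)"
      using g h d0 by (simp add: m_assoc inv_mult_group)
    then show ?thesis unfolding D_def using g h by blast
  qed
  show ?thesis
    by unfold_locales
      (use D_carrier D_involution D_conj_closed ord braid_of_involutions in \<open>auto simp: subsetD\<close>)
qed

theorem proposition2p9:
  fixes G :: "('a, 'b) monoid_scheme" and D :: "'a set" and d0 :: 'a and I :: "'a set set"
  assumes "group G"
    and "d0 \<in> carrier G"
    and "D = {g \<otimes>\<^bsub>G\<^esub> d0 \<otimes>\<^bsub>G\<^esub> inv\<^bsub>G\<^esub> g | g. g \<in> carrier G}"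
    and "d0 \<noteq> \<one>\<^bsub>G\<^esub>" and "d0 \<otimes>\<^bsub>G\<^esub> d0 = \<one>\<^bsub>G\<^esub>"
    and "generate G D = carrier G"
    and "\<forall>d\<in>D. \<forall>e\<in>D. group.ord G (d \<otimes>\<^bsub>G\<^esub> e) \<in> {1, 2, 3}"
    and "AD_ideal G D I"
  shows "quotient_is_lie G D I \<longleftrightarrow>
    (\<forall>P. fischer_plane G D P \<and> iso_affine_plane_3 G D P \<longrightarrow> P \<in> I)"
proof -
  interpret group G by (rule assms(1))
  interpret fischer_class G D
    using assms(2,5,3,7) by (rule fischer_class_conjugacy_class)
  show ?thesis
    using affine_plane_mem_of_quotient_is_lie quotient_is_lie_of_affine_planes_mem[OF assms(8)] by blast
qed

end
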